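(* Let $k$ be an algebraically closed field of characteristic zero and $0<l<n$. Let $Y,Z\subset\mathbb P^n$ be closed subvarieties with saturated homogeneous ideals $I_Y,I_Z$, $X$ defined by $I_X=I_Y\cap I_Z$, with $Y\subset\{x_0=\cdots=x_{l-1}=0\}$, $Z\subset\{x_{l+1}=\cdots=x_n=0\}$ and $Y\cap Z\neq\emptyset$. Let $\rho:\mathbb G_m\to\mathrm{GL}_{n+1}$ be diagonalized by $x_0,\dots,x_n$ with weights $(r_0,\dots,r_n)$, and let $\rho',\rho''$ be its restrictions to $\mathrm{GL}(kx_l+\cdots+kx_n)$ and $\mathrm{GL}(kx_0+\cdots+kx_l)$. Regard $Y$ as a subvariety of $\{x_0=\cdots=x_{l-1}=0\}\cong\mathbb P^{n-l}$ (ideal $I_Y\cap k[x_l,\dots,x_n]$) and $Z$ as a subvariety of $\{x_{l+1}=\cdots=x_n=0\}\cong\mathbb P^l$ (ideal $I_Z\cap k[x_0,\dots,x_l]$). Let $P_Y(m)=\dim_k(k[x_l,\dots,x_n]/\mathrm{in}_{\prec_{\rho'}}(I_Y\cap k[x_l,\dots,x_n]))_m$, $P_Z(m)=\dim_k(k[x_0,\dots,x_l]/\mathrm{in}_{\prec_{\rho''}}(I_Z\cap k[x_0,\dots,x_l]))_m$, and $P_X$ the Hilbert polynomial of $X$. Then \[ \mu([X]_m^\star,\rho)=\mu([Y]_m^\star,\rho')+\mu([Z]_m^\star,\rho'')-\frac{mP_Y(m)}{n+1-l}\sum_{i=l}^n r_i-\frac{mP_Z(m)}{l+1}\sum_{i=0}^l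 r_i+\frac{mP_X(m)}{n+1}\sum_{i=0}^n r_i+mr_l. \]
   Context: Here $m$ is a positive integer at least the Castelnuovo–Mumford regularity of all ideals involved, so that Hilbert points are defined and degree-$m$ quotient dimensions equal Hilbert polynomial values. For a homogeneous ideal $J\subset k[y_0,\dots,y_N]$ defining $W\subset\mathbb P^N$ with Hilbert polynomial $P_W$, and $\rho$ diagonal in the $y_i$ with weights $(r_0,\dots,r_N)$, the Hilbert–Mumford index of the $m$th dual Hilbert point $[W]_m^\star=[S_m\to S_m/J_m]$ is $\mu([W]_m^\star,\rho)=-\sum_{x^\alpha}\mathrm{wt}_\rho(x^\alpha)+\frac{mP_W(m)}{N+1}\sum_{i=0}^N r_i$, the sum over degree-$m$ monomials not in $\mathrm{in}_{\prec_\rho}(J)$, where $\mathrm{wt}_\rho(x^\alpha)=\sum\alpha_ir_i$ and $\prec_\rho$ is the $\rho$-weighted order (monomials compared first by $\rho$-weight, ties broken by a fixed monomial order), used consistently and restricted to subrings (giving $\prec_{\rho'},\prec_{\rho''}$). *)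

theory Defs
  imports "HOL-Library.Poly_Mapping" "HOL-Computational_Algebra.Polynomial"
begin

type_synonym mono = "nat \<Rightarrow>\<^sub>0 nat"
type_synonym 'a mpoly = "mono \<Rightarrow>\<^sub>0 'a"

definition alg_closed :: "'a::field itself \<Rightarrow> bool" where
  "alg_closed _ \<longleftrightarrow> (\<forall>p :: 'a poly. degree p > 0 \<longrightarrow> (\<exists>x. poly p x = 0))"

definition mdeg :: "mono \<Rightarrow> nat" where
  "mdeg a = (\<Sum>i\<in>Poly_Mapping.keys a. Poly_Mapping.lookup a i)"

definition polys_in :: "nat set \<Rightarrow> ('a::zero) mpoly set" where
  "polys_in V = {p. \<forall>a\<in>Poly_Mapping.keys p. Poly_Mapping.keys a \<subseteq> V}"

definition monos_deg :: "nat set \<Rightarrow> nat \<Rightarrow> mono set" where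
  "monos_deg V m = {a. Poly_Mapping.keys a \<subseteq> V \<and> mdeg a = m}"

definition homog_of_deg :: "nat \<Rightarrow> ('a::zero) mpoly \<Rightarrow> bool" where
  "homog_of_deg d p \<longleftrightarrow> (\<forall>a\<in>Poly_Mapping.keys p. mdeg a = d)"

definition homog :: "('a::zero) mpoly \<Rightarrow> bool" where
  "homog p \<longleftrightarrow> (\<exists>d. homog_of_deg d p)"

definition var :: "nat \<Rightarrow> ('a::{zero,one}) mpoly" where
  "var i = Poly_Mapping.single (Poly_Mapping.single i 1) 1"

definition mmonom :: "mono \<Rightarrow> ('a::{zero,one}) mpoly" where
  "mmonom a = Poly_Mapping.single a 1"

definition meval :: "('a::comm_semiring_1) mpoly \<Rightarrow> (nat \<Rightarrow> 'a) \<Rightarrow> 'a" where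
  "meval p x = (\<Sum>a\<in>Poly_Mapping.keys p. Poly_Mapping.lookup p a * (\<Prod>i\<in>Poly_Mapping.keys a. x i ^ Poly_Mapping.lookup a i))"

definition ideal_gen :: "nat set \<Rightarrow> ('a::comm_ring_1) mpoly set \<Rightarrow> 'a mpoly set" where
  "ideal_gen V G = {p. \<exists>F q. finite F \<and> F \<subseteq> G \<and> (\<forall>g\<in>F. q g \<in> polys_in V)
                          \<and> p = (\<Sum>g\<in>F. q g * g)}"

text \<open>Affine cone over projective space P^n: nonzero vectors (x_0,...,x_n),
  extended by 0 beyond index n.\<close>
definition cone_pts :: "nat \<Rightarrow> (nat \<Rightarrow> 'a::zero) set" where
  "cone_pts n = {x. (\<forall>i>n. x i = 0) \<and> (\<exists>i\<le>n. x i \<noteq> 0)}"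

definition proj_closed :: "nat \<Rightarrow> (nat \<Rightarrow> 'a::comm_semiring_1) set \<Rightarrow> bool" where
  "proj_closed n Y \<longleftrightarrow> (\<exists>F. F \<subseteq> polys_in {0..n} \<and> (\<forall>f\<in>F. homog f)
      \<and> Y = {x\<in>cone_pts n. \<forall>f\<in>F. meval f x = 0})"

definition proj_subvariety :: "nat \<Rightarrow> (nat \<Rightarrow> 'a::comm_semiring_1) set \<Rightarrow> bool" where
  "proj_subvariety n Y \<longleftrightarrow> proj_closed n Y \<and> Y \<noteq> {} \<and>
     (\<forall>Y1 Y2. proj_closed n Y1 \<longrightarrow> proj_closed n Y2 \<longrightarrow> Y = Y1 \<union> Y2 \<longrightarrow> Y = Y1 \<or> Y = Y2)"

text \<open>The saturated homogeneous ideal I_Y in k[x_0,...,x_n] of Y (its vanishing ideal).\<close>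
definition vanishing_ideal :: "nat \<Rightarrow> (nat \<Rightarrow> 'a::comm_semiring_1) set \<Rightarrow> 'a mpoly set" where
  "vanishing_ideal n Y = {f\<in>polys_in {0..n}. \<forall>x\<in>Y. meval f x = 0}"

definition monomial_order :: "(mono \<Rightarrow> mono \<Rightarrow> bool) \<Rightarrow> bool" where
  "monomial_order lt \<longleftrightarrow>
     (\<forall>a. \<not> lt a a) \<and> (\<forall>a b c. lt a b \<longrightarrow> lt b c \<longrightarrow> lt a c) \<and>
     (\<forall>a b. a \<noteq> b \<longrightarrow> lt a b \<or> lt b a) \<and> (\<forall>a. a \<noteq> 0 \<longrightarrow> lt 0 a) \<and>
     (\<forall>a b c. lt a b \<longrightarrow> lt (a + c) (b + c))"

definition wt :: "(nat \<Rightarrow> int) \<Rightarrow> mono \<Rightarrow> int" where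
  "wt r a = (\<Sum>i\<in>Poly_Mapping.keys a. int (Poly_Mapping.lookup a i) * r i)"

definition weighted_ord :: "(nat \<Rightarrow> int) \<Rightarrow> (mono \<Rightarrow> mono \<Rightarrow> bool) \<Rightarrow> mono \<Rightarrow> mono \<Rightarrow> bool" where
  "weighted_ord r lt a b \<longleftrightarrow> wt r a < wt r b \<or> (wt r a = wt r b \<and> lt a b)"

definition lead_mono :: "(mono \<Rightarrow> mono \<Rightarrow> bool) \<Rightarrow> ('a::zero) mpoly \<Rightarrow> mono" where
  "lead_mono ord f = (THE a. a \<in> Poly_Mapping.keys f \<and> (\<forall>b\<in>Poly_Mapping.keys f. b \<noteq> a \<longrightarrow> ord b a))"

definition lead_term :: "(mono \<Rightarrow> mono \<Rightarrow> bool) \<Rightarrow> ('a::zero) mpoly \<Rightarrow> 'a mpoly" where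
  "lead_term ord f = Poly_Mapping.single (lead_mono ord f) (Poly_Mapping.lookup f (lead_mono ord f))"

definition init_ideal :: "nat set \<Rightarrow> (mono \<Rightarrow> mono \<Rightarrow> bool) \<Rightarrow> ('a::comm_ring_1) mpoly set \<Rightarrow> 'a mpoly set" where
  "init_ideal V ord J = ideal_gen V {lead_term ord f | f. f \<in> J \<and> f \<noteq> 0}"

definition std_monos :: "nat set \<Rightarrow> (mono \<Rightarrow> mono \<Rightarrow> bool) \<Rightarrow> ('a::comm_ring_1) mpoly set \<Rightarrow> nat \<Rightarrow> mono set" where
  "std_monos V ord J m = {a\<in>monos_deg V m. mmonom a \<notin> init_ideal V ord J}"

text \<open>dim_k (k[x_i : i in V] / in(J))_m  (a monomial quotient).\<close>
definition init_quot_dim :: "nat set \<Rightarrow> (mono \<Rightarrow> mono \<Rightarrow> bool) \<Rightarrow> ('a::comm_ring_1) mpoly set \<Rightarrow> nat \<Rightarrow> nat" where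
  "init_quot_dim V ord J m = card (std_monos V ord J m)"

definition hilb_fun :: "nat set \<Rightarrow> ('a::field) mpoly set \<Rightarrow> nat \<Rightarrow> nat" where
  "hilb_fun V J m = card (monos_deg V m)
     - vector_space.dim (\<lambda>c p. Poly_Mapping.map ((*) c) p)
         {f\<in>J. f \<in> polys_in V \<and> homog_of_deg m f}"

text \<open>Hilbert--Mumford index of the m-th dual Hilbert point of W (ideal J in the
  variables V, N+1 = card V), with P_W(m) supplied as the argument P.\<close>
definition hm_index :: "nat set \<Rightarrow> (nat \<Rightarrow> int) \<Rightarrow> (mono \<Rightarrow> mono \<Rightarrow> bool) \<Rightarrow>
    ('a::comm_ring_1) mpoly set \<Rightarrow> nat \<Rightarrow> nat \<Rightarrow> real" where
  "hm_index V r lt J m P =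
     - real_of_int (\<Sum>a\<in>std_monos V (weighted_ord r lt) J m. wt r a)
     + real m * real P / real (card V) * real_of_int (\<Sum>i\<in>V. r i)"

end

theory Submission
  imports Defs "HOL-Library.FuncSet"
begin

text \<open>
  Write \<open>S_X, S_Y, S_Z\<close> for the degree-\<open>m\<close> standard monomials of \<open>I_X\<close>,
  \<open>I_Y \<inter> k[x_l..x_n]\<close> and \<open>I_Z \<inter> k[x_0..x_l]\<close> for the weighted order. Since \<open>Y\<close>
  and \<open>Z\<close> meet, they meet in the coordinate point \<open>e_l\<close>; over an infinite field this
  forbids pure powers of \<open>x_l\<close> among the terms of elements of \<open>I_Y\<close> and \<open>I_Z\<close>.
  Consequently every element of \<open>I_Y \<inter> k[x_l..x_n]\<close> vanishes on \<open>Z\<close> (each of its terms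
  involves some \<open>x_j\<close>, \<open>j > l\<close>) and symmetrically, so both restricted ideals lie in
  \<open>I_X\<close>; conversely, setting the variables outside \<open>x_l..x_n\<close> (resp. \<open>x_0..x_l\<close>) to zero
  maps \<open>I_X\<close> into them while keeping any leading monomial that lies in the subring.
  Monomials involving both some \<open>x_i\<close>, \<open>i < l\<close>, and some \<open>x_j\<close>, \<open>j > l\<close>, lie in \<open>I_X\<close>.
  Hence \<open>S_X = S_Y \<union> S_Z\<close> and \<open>S_Y \<inter> S_Z = {x_l^m}\<close>, so summing weights gives
  \<open>\<Sum>S_X = \<Sum>S_Y + \<Sum>S_Z - m r_l\<close>, of which the formula is a rearrangement.
\<close>

abbreviation keys :: "('b \<Rightarrow>\<^sub>0 'c::zero) \<Rightarrow> 'b set" where "keys \<equiv> Poly_Mapping.keys"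
abbreviation lookup :: "('b \<Rightarrow>\<^sub>0 'c::zero) \<Rightarrow> 'b \<Rightarrow> 'c" where "lookup \<equiv> Poly_Mapping.lookup"

lemma keys_plus_mono: "keys ((a::mono) + b) = keys a \<union> keys b"
  by (rule set_eqI) (metis in_keys_iff lookup_add add_is_0 Un_iff)

lemma mono_eq_single_if_keys_subset:
  assumes "keys (a::mono) \<subseteq> {i}"
  shows "a = Poly_Mapping.single i (lookup a i)"
proof (rule poly_mapping_eqI)
  fix k
  show "lookup a k = lookup (Poly_Mapping.single i (lookup a i)) k"
  proof (cases "k = i")
    case False
    with assms have "k \<notin> keys a" by blast
    with False show ?thesis by (simp add: in_keys_iff lookup_single_not_eq)
  qed simp
qed

lemma monos_deg_singleton: "monos_deg {i} m = {Poly_Mapping.single i m}"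
proof (intro set_eqI iffI)
  fix a assume "a \<in> monos_deg {i} m"
  then have keys_a: "keys a \<subseteq> {i}" and deg: "mdeg a = m" unfolding monos_deg_def by auto
  from keys_a have "keys a = {} \<or> keys a = {i}" by (rule subset_singletonD)
  then have "lookup a i = m"
    using deg unfolding mdeg_def by (auto simp: in_keys_iff)
  with mono_eq_single_if_keys_subset[OF keys_a] show "a \<in> {Poly_Mapping.single i m}" by simp
next
  fix a assume "a \<in> {Poly_Mapping.single i m}"
  then show "a \<in> monos_deg {i} m"
    unfolding monos_deg_def mdeg_def by (cases "m = 0") simp_all
qed

lemma monos_deg_Int: "monos_deg V m \<inter> monos_deg W m = monos_deg (V \<inter> W) m"
  unfolding monos_deg_def by auto

lemma finite_monos_deg:
  assumes "finite V"
  shows "finite (monos_deg V m)"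
proof -
  have "inj_on (\<lambda>a. restrict (lookup a) V) (monos_deg V m)"
  proof
    fix a b assume a: "a \<in> monos_deg V m" and b: "b \<in> monos_deg V m"
      and eq: "restrict (lookup a) V = restrict (lookup b) V"
    show "a = b"
    proof (rule poly_mapping_eqI)
      fix i show "lookup a i = lookup b i"
      proof (cases "i \<in> V")
        case True
        then show ?thesis using fun_cong[OF eq, of i] by simp
      next
        case False
        then have "i \<notin> keys a" "i \<notin> keys b" using a b unfolding monos_deg_def by auto
        then show ?thesis by (simp add: in_keys_iff)
      qed
    qed
  qed
  moreover have "lookup a i \<le> m" if "a \<in> monos_deg V m" for a i
  proof (cases "i \<in> keys a")
    case True
    then have "lookup a i \<le> (\<Sum>j\<in>keys a. lookup a j)" by (intro member_le_sum) auto
    with that show ?thesis unfolding monos_deg_def mdeg_def by simp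
  qed (simp add: in_keys_iff)
  then have "(\<lambda>a. restrict (lookup a) V) ` monos_deg V m \<subseteq> (\<Pi>\<^sub>E i \<in> V. {..m})"
    by auto
  then have "finite ((\<lambda>a. restrict (lookup a) V) ` monos_deg V m)"
    by (rule finite_subset) (simp add: finite_PiE assms)
  ultimately show ?thesis using finite_imageD by blast
qed

section \<open>Leading monomials and initial ideals\<close>

text \<open>Weights may be negative, so the weighted order need not satisfy \<open>monomial_order\<close>;
  leading monomials only need a strict total order.\<close>

definition strict_total_order :: "(mono \<Rightarrow> mono \<Rightarrow> bool) \<Rightarrow> bool" where
  "strict_total_order ord \<longleftrightarrow> (\<forall>a. \<not> ord a a) \<and> (\<forall>a b c. ord a b \<longrightarrow> ord b c \<longrightarrow> ord a c) \<and>
     (\<forall>a b. a \<noteq> b \<longrightarrow> ord a b \<or> ord b a)"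

lemma strict_total_order_weighted_ord:
  assumes "monomial_order lt"
  shows "strict_total_order (weighted_ord r lt)"
proof -
  have irrefl: "\<not> lt a a" and trans: "lt a b \<Longrightarrow> lt b c \<Longrightarrow> lt a c"
    and total: "a \<noteq> b \<Longrightarrow> lt a b \<or> lt b a" for a b c
    using assms unfolding monomial_order_def by blast+
  show ?thesis
    unfolding strict_total_order_def weighted_ord_def
  proof (intro conjI allI impI)
    fix a b c :: mono
    assume "wt r a < wt r b \<or> wt r a = wt r b \<and> lt a b" "wt r b < wt r c \<or> wt r b = wt r c \<and> lt b c"
    then show "wt r a < wt r c \<or> wt r a = wt r c \<and> lt a c"
      using trans[of a b c] by linarith
  next
    fix a b :: mono
    assume "a \<noteq> b"
    then show "(wt r a < wt r b \<or> wt r a = wt r b \<and> lt a b) \<or> (wt r b < wt r a \<or> wt r b = wt r a \<and> lt b a)"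
      using total[of a b] by linarith
  qed (use irrefl in auto)
qed

lemma strict_total_order_has_greatest:
  assumes "strict_total_order ord" and "finite K" and "K \<noteq> {}"
  shows "\<exists>a\<in>K. \<forall>b\<in>K. b \<noteq> a \<longrightarrow> ord b a"
  using assms(2,3)
proof (induction K rule: finite_ne_induct)
  case (insert x F)
  then obtain a where a: "a \<in> F" "\<forall>b\<in>F. b \<noteq> a \<longrightarrow> ord b a" by blast
  have trans: "ord b c \<Longrightarrow> ord c d \<Longrightarrow> ord b d"
    and total: "b \<noteq> c \<Longrightarrow> ord b c \<or> ord c b" for b c d
    using assms(1) unfolding strict_total_order_def by blast+
  show ?case
  proof (cases "ord a x")
    case True
    have "ord b x" if "b \<in> insert x F" "b \<noteq> x" for b
      using that True a trans by (cases "b = a") auto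
    then show ?thesis by blast
  next
    case False
    then have "x \<noteq> a \<longrightarrow> ord x a" using total by blast
    then show ?thesis using a by blast
  qed
qed simp

lemma lead_mono_eqI:
  assumes "strict_total_order ord" and "a \<in> keys f" and "\<forall>b\<in>keys f. b \<noteq> a \<longrightarrow> ord b a"
  shows "lead_mono ord f = a"
  unfolding lead_mono_def
proof (rule the_equality)
  fix a' assume "a' \<in> keys f \<and> (\<forall>b\<in>keys f. b \<noteq> a' \<longrightarrow> ord b a')"
  with assms show "a' = a" unfolding strict_total_order_def by metis
qed (use assms in blast)

lemma lead_mono_greatest:
  assumes "strict_total_order ord" and "f \<noteq> 0"
  shows "lead_mono ord f \<in> keys f" and "\<forall>b\<in>keys f. b \<noteq> lead_mono ord f \<longrightarrow> ord b (lead_mono ord f)"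
proof -
  obtain a where "a \<in> keys f" "\<forall>b\<in>keys f. b \<noteq> a \<longrightarrow> ord b a"
    using strict_total_order_has_greatest[OF assms(1), of "keys f"] assms(2) by auto
  with lead_mono_eqI[OF assms(1)] show "lead_mono ord f \<in> keys f"
    and "\<forall>b\<in>keys f. b \<noteq> lead_mono ord f \<longrightarrow> ord b (lead_mono ord f)" by auto
qed

lemma lead_mono_of_keys_subset:
  assumes "strict_total_order ord" and "f \<noteq> 0" and "keys g \<subseteq> keys f"
    and "lead_mono ord f \<in> keys g"
  shows "lead_mono ord g = lead_mono ord f"
  using lead_mono_eqI[OF assms(1,4)] lead_mono_greatest[OF assms(1,2)] assms(3) by blast

lemma lead_mono_mmonom:
  assumes "strict_total_order ord"
  shows "lead_mono ord (mmonom a :: 'a::zero_neq_one mpoly) = a"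
  by (rule lead_mono_eqI[OF assms]) (simp_all add: mmonom_def)

lemma polys_in_mono: "V \<subseteq> U \<Longrightarrow> polys_in V \<subseteq> polys_in U"
  unfolding polys_in_def by blast

lemma ideal_gen_mono:
  assumes "V \<subseteq> U" and "G \<subseteq> H"
  shows "ideal_gen V G \<subseteq> ideal_gen U H"
proof
  fix p assume "p \<in> ideal_gen V G"
  then obtain F q where F: "finite F" "F \<subseteq> G" and q: "\<forall>g\<in>F. q g \<in> polys_in V"
    and p: "p = (\<Sum>g\<in>F. q g * g)"
    unfolding ideal_gen_def by blast
  have "F \<subseteq> H" "\<forall>g\<in>F. q g \<in> polys_in U"
    using F(2) q assms polys_in_mono[OF assms(1)] by blast+
  with F(1) p show "p \<in> ideal_gen U H"
    unfolding ideal_gen_def by blast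
qed

lemma init_ideal_mono:
  assumes "V \<subseteq> U" and "I \<subseteq> J"
  shows "init_ideal V ord I \<subseteq> init_ideal U ord J"
  unfolding init_ideal_def by (rule ideal_gen_mono) (use assms in blast)+

lemma mmonom_in_init_ideal_iff:
  fixes J :: "'a::field mpoly set"
  assumes "strict_total_order ord" and "keys a \<subseteq> V"
  shows "mmonom a \<in> init_ideal V ord J \<longleftrightarrow> (\<exists>f\<in>J. f \<noteq> 0 \<and> (\<exists>c. a = lead_mono ord f + c))"
proof
  assume "mmonom a \<in> init_ideal V ord J"
  then obtain F q where F: "F \<subseteq> {lead_term ord f | f. f \<in> J \<and> f \<noteq> 0}"
    and eq: "mmonom a = (\<Sum>g\<in>F. q g * g)"
    unfolding init_ideal_def ideal_gen_def by blast
  have "a \<in> keys (\<Sum>g\<in>F. q g * g)"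
    unfolding eq[symmetric] by (simp add: mmonom_def)
  then obtain g where "g \<in> F" and a_in: "a \<in> keys (q g * g)"
    using keys_sum[of "\<lambda>g. q g * g" F] by blast
  then obtain f where f: "f \<in> J" "f \<noteq> 0" and g: "g = lead_term ord f" using F by blast
  have "keys g \<subseteq> {lead_mono ord f}" unfolding g lead_term_def by simp
  then obtain c where "a = c + lead_mono ord f"
    using a_in keys_mult[of "q g" g] by blast
  with f show "\<exists>f\<in>J. f \<noteq> 0 \<and> (\<exists>c. a = lead_mono ord f + c)"
    by (metis add.commute)
next
  assume "\<exists>f\<in>J. f \<noteq> 0 \<and> (\<exists>c. a = lead_mono ord f + c)"
  then obtain f c where f: "f \<in> J" "f \<noteq> 0" and a: "a = lead_mono ord f + c" by blast
  define q where "q = Poly_Mapping.single c (inverse (lookup f (lead_mono ord f)))"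
  have "lookup f (lead_mono ord f) \<noteq> 0"
    using lead_mono_greatest(1)[OF assms(1) f(2)] by (simp add: in_keys_iff)
  then have eq: "mmonom a = q * lead_term ord f"
    unfolding q_def lead_term_def mmonom_def mult_single a by (simp add: add.commute)
  have "keys c \<subseteq> V"
    using assms(2) unfolding a keys_plus_mono by blast
  then have "q \<in> polys_in V"
    unfolding q_def polys_in_def by simp
  moreover have "lead_term ord f \<in> {lead_term ord f | f. f \<in> J \<and> f \<noteq> 0}"
    using f by blast
  ultimately show "mmonom a \<in> init_ideal V ord J"
    unfolding init_ideal_def ideal_gen_def eq
    by (intro CollectI exI[of _ "{lead_term ord f}"] exI[of _ "\<lambda>_. q"]) simp
qed

lemma mmonom_in_init_ideal:
  fixes J :: "'a::field mpoly set"
  assumes "strict_total_order ord" and "keys a \<subseteq> V" and "mmonom a \<in> J"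
  shows "mmonom a \<in> init_ideal V ord J"
proof -
  have "keys (mmonom a :: 'a mpoly) = {a}" by (simp add: mmonom_def)
  then have "mmonom a \<noteq> (0 :: 'a mpoly)" by auto
  moreover have "a = lead_mono ord (mmonom a :: 'a mpoly) + 0"
    by (simp add: lead_mono_mmonom[OF assms(1)])
  ultimately show ?thesis
    using mmonom_in_init_ideal_iff[OF assms(1,2)] assms(3) by blast
qed

lemma mmonom_notin_init_ideal:
  fixes I :: "'a::field mpoly set"
  assumes "strict_total_order ord" and "keys a \<subseteq> V" and "keys a \<subseteq> W"
    and "\<forall>g\<in>I. \<forall>b\<in>keys g. \<not> keys b \<subseteq> W"
  shows "mmonom a \<notin> init_ideal V ord I"
proof
  assume "mmonom a \<in> init_ideal V ord I"
  then obtain g c where g: "g \<in> I" "g \<noteq> 0" and a: "a = lead_mono ord g + c"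
    using mmonom_in_init_ideal_iff[OF assms(1,2)] by blast
  have "keys (lead_mono ord g) \<subseteq> W"
    using assms(3) unfolding a keys_plus_mono by blast
  with lead_mono_greatest(1)[OF assms(1) g(2)] assms(4) g(1) show False by blast
qed

section \<open>Standard monomials of restricted ideals\<close>

definition restrict_vars :: "nat set \<Rightarrow> 'a::zero mpoly \<Rightarrow> 'a mpoly" where
  "restrict_vars V f = Abs_poly_mapping (\<lambda>a. if keys a \<subseteq> V then lookup f a else 0)"

lemma lookup_restrict_vars:
  "lookup (restrict_vars V f) a = (if keys a \<subseteq> V then lookup f a else 0)"
proof -
  have "{a. (if keys a \<subseteq> V then lookup f a else 0) \<noteq> 0} \<subseteq> keys f"
  proof
    fix a assume "a \<in> {a. (if keys a \<subseteq> V then lookup f a else 0) \<noteq> 0}"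
    then have "lookup f a \<noteq> 0" by (simp split: if_splits)
    then show "a \<in> keys f" by (metis in_keys_iff)
  qed
  then have "finite {a. (if keys a \<subseteq> V then lookup f a else 0) \<noteq> 0}"
    using finite_keys finite_subset by blast
  then show ?thesis unfolding restrict_vars_def by simp
qed

lemma keys_restrict_vars: "keys (restrict_vars V f) = {a \<in> keys f. keys a \<subseteq> V}"
proof (rule set_eqI)
  fix a
  have "a \<in> keys (restrict_vars V f) \<longleftrightarrow> lookup (restrict_vars V f) a \<noteq> 0"
    by (rule in_keys_iff)
  also have "\<dots> \<longleftrightarrow> keys a \<subseteq> V \<and> lookup f a \<noteq> 0"
    by (simp add: lookup_restrict_vars)
  also have "\<dots> \<longleftrightarrow> a \<in> {a \<in> keys f. keys a \<subseteq> V}"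
    using in_keys_iff[of a f] by blast
  finally show "a \<in> keys (restrict_vars V f) \<longleftrightarrow> a \<in> {a \<in> keys f. keys a \<subseteq> V}" .
qed

lemma restrict_vars_in_polys_in: "restrict_vars V f \<in> polys_in V"
  by (auto simp: polys_in_def keys_restrict_vars)

lemma meval_restrict_vars:
  fixes f :: "'a::comm_semiring_1 mpoly"
  assumes "\<forall>i. i \<notin> V \<longrightarrow> x i = 0"
  shows "meval (restrict_vars V f) x = meval f x"
  unfolding meval_def
proof (rule sum.mono_neutral_cong_left)
  show "keys (restrict_vars V f) \<subseteq> keys f" by (auto simp: keys_restrict_vars)
  show "\<forall>a\<in>keys f - keys (restrict_vars V f). lookup f a * (\<Prod>i\<in>keys a. x i ^ lookup a i) = 0"
  proof
    fix a assume "a \<in> keys f - keys (restrict_vars V f)"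
    then obtain j where j: "j \<in> keys a" "j \<notin> V" by (auto simp: keys_restrict_vars)
    with assms have "x j ^ lookup a j = 0" by (simp add: in_keys_iff zero_power)
    with j(1) have "(\<Prod>i\<in>keys a. x i ^ lookup a i) = 0"
      by (intro prod_zero) auto
    then show "lookup f a * (\<Prod>i\<in>keys a. x i ^ lookup a i) = 0" by simp
  qed
qed (auto simp: keys_restrict_vars lookup_restrict_vars)

lemma meval_eq_0_if_no_monomial_in:
  fixes f :: "'a::comm_semiring_1 mpoly"
  assumes "\<forall>i. i \<notin> V \<longrightarrow> x i = 0" and "\<forall>a\<in>keys f. \<not> keys a \<subseteq> V"
  shows "meval f x = 0"
proof -
  have "keys (restrict_vars V f) = {}"
    using assms(2) by (auto simp: keys_restrict_vars)
  then have "restrict_vars V f = 0" by simp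
  then show ?thesis
    using meval_restrict_vars[OF assms(1), of f] by (simp add: meval_def)
qed

lemma std_monos_eq_of_restrict_vars:
  fixes I J :: "'a::field mpoly set"
  assumes ord: "strict_total_order ord" and "V \<subseteq> U" and "I \<subseteq> J"
    and restrict: "\<And>f. f \<in> J \<Longrightarrow> restrict_vars V f \<in> I"
  shows "std_monos V ord I m = std_monos U ord J m \<inter> monos_deg V m"
proof (intro set_eqI iffI)
  fix a assume a: "a \<in> std_monos U ord J m \<inter> monos_deg V m"
  then have "mmonom a \<notin> init_ideal V ord I"
    using init_ideal_mono[OF assms(2,3)] unfolding std_monos_def by blast
  with a show "a \<in> std_monos V ord I m" unfolding std_monos_def by blast
next
  fix a assume a: "a \<in> std_monos V ord I m"
  then have a_deg: "a \<in> monos_deg V m" and a_notin: "mmonom a \<notin> init_ideal V ord I"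
    unfolding std_monos_def by blast+
  then have keys_a: "keys a \<subseteq> V" unfolding monos_deg_def by blast
  have "mmonom a \<notin> init_ideal U ord J"
  proof
    assume "mmonom a \<in> init_ideal U ord J"
    then obtain f c where f: "f \<in> J" "f \<noteq> 0" and a_eq: "a = lead_mono ord f + c"
      using mmonom_in_init_ideal_iff[OF ord] keys_a assms(2) by (meson order_trans)
    define g where "g = restrict_vars V f"
    have "keys (lead_mono ord f) \<subseteq> V"
      using keys_a unfolding a_eq keys_plus_mono by blast
    then have lead_g: "lead_mono ord f \<in> keys g"
      using lead_mono_greatest(1)[OF ord f(2)] unfolding g_def keys_restrict_vars by blast
    moreover have "keys g \<subseteq> keys f" unfolding g_def keys_restrict_vars by blast
    ultimately have "lead_mono ord g = lead_mono ord f"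
      using lead_mono_of_keys_subset[OF ord f(2)] by blast
    moreover have "g \<noteq> 0" using lead_g by auto
    moreover have "g \<in> I" unfolding g_def by (rule restrict[OF f(1)])
    ultimately have "mmonom a \<in> init_ideal V ord I"
      using mmonom_in_init_ideal_iff[OF ord keys_a] a_eq by metis
    with a_notin show False ..
  qed
  moreover have "a \<in> monos_deg U m" using a_deg assms(2) unfolding monos_deg_def by blast
  ultimately show "a \<in> std_monos U ord J m \<inter> monos_deg V m"
    using a_deg unfolding std_monos_def by blast
qed

lemma std_monos_split:
  fixes J Y' Z' :: "'a::field mpoly set"
  assumes ord: "strict_total_order ord" and "l \<le> n"
    and "Y' \<subseteq> J" and "Z' \<subseteq> J"
    and "\<And>f. f \<in> J \<Longrightarrow> restrict_vars {l..n} f \<in> Y'"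
    and "\<And>f. f \<in> J \<Longrightarrow> restrict_vars {0..l} f \<in> Z'"
    and mixed: "\<And>a. keys a \<subseteq> {0..n} \<Longrightarrow> \<not> keys a \<subseteq> {l..n} \<Longrightarrow> \<not> keys a \<subseteq> {0..l} \<Longrightarrow> mmonom a \<in> J"
    and no_pure: "\<forall>g\<in>Y'. \<forall>b\<in>keys g. \<not> keys b \<subseteq> {l}"
  shows "std_monos {0..n} ord J m = std_monos {l..n} ord Y' m \<union> std_monos {0..l} ord Z' m"
    and "std_monos {l..n} ord Y' m \<inter> std_monos {0..l} ord Z' m = {Poly_Mapping.single l m}"
proof -
  let ?S = "std_monos {0..n} ord J m"
  have SY: "std_monos {l..n} ord Y' m = ?S \<inter> monos_deg {l..n} m"
    by (rule std_monos_eq_of_restrict_vars[OF ord _ assms(3,5)]) auto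
  have SZ: "std_monos {0..l} ord Z' m = ?S \<inter> monos_deg {0..l} m"
    by (rule std_monos_eq_of_restrict_vars[OF ord _ assms(4,6)]) (use assms(2) in auto)
  have "?S \<subseteq> monos_deg {l..n} m \<union> monos_deg {0..l} m"
  proof
    fix a assume "a \<in> ?S"
    then have keys_a: "keys a \<subseteq> {0..n}" and deg: "mdeg a = m"
      and notin: "mmonom a \<notin> init_ideal {0..n} ord J"
      unfolding std_monos_def monos_deg_def by auto
    have "keys a \<subseteq> {l..n} \<or> keys a \<subseteq> {0..l}"
      using notin mixed[OF keys_a] mmonom_in_init_ideal[OF ord keys_a] by blast
    with deg show "a \<in> monos_deg {l..n} m \<union> monos_deg {0..l} m"
      unfolding monos_deg_def by blast
  qed
  then show "?S = std_monos {l..n} ord Y' m \<union> std_monos {0..l} ord Z' m"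
    unfolding SY SZ by blast
  have "Poly_Mapping.single l m \<in> monos_deg {l..n} m"
    using monos_deg_singleton[of l m] assms(2) unfolding monos_deg_def by auto
  moreover have "mmonom (Poly_Mapping.single l m) \<notin> init_ideal {l..n} ord Y'"
    by (rule mmonom_notin_init_ideal[OF ord _ _ no_pure]) (use assms(2) in simp_all)
  ultimately have "Poly_Mapping.single l m \<in> std_monos {l..n} ord Y' m"
    unfolding std_monos_def by blast
  then have single_std: "Poly_Mapping.single l m \<in> ?S" unfolding SY by blast
  have "std_monos {l..n} ord Y' m \<inter> std_monos {0..l} ord Z' m = ?S \<inter> monos_deg ({l..n} \<inter> {0..l}) m"
    unfolding SY SZ monos_deg_Int[symmetric] by blast
  also have "{l..n} \<inter> {0..l} = {l}" using assms(2) by auto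
  finally show "std_monos {l..n} ord Y' m \<inter> std_monos {0..l} ord Z' m = {Poly_Mapping.single l m}"
    using single_std by (simp add: monos_deg_singleton)
qed

section \<open>Vanishing ideals of cones\<close>

lemma meval_scale:
  fixes f :: "'a::comm_semiring_1 mpoly"
  assumes "homog_of_deg d f"
  shows "meval f (\<lambda>i. c * x i) = c ^ d * meval f x"
  unfolding meval_def sum_distrib_left
proof (rule sum.cong[OF refl])
  fix a assume a: "a \<in> keys f"
  have "(\<Prod>i\<in>keys a. (c * x i) ^ lookup a i)
      = (\<Prod>i\<in>keys a. c ^ lookup a i) * (\<Prod>i\<in>keys a. x i ^ lookup a i)"
    by (simp add: power_mult_distrib prod.distrib)
  also have "(\<Prod>i\<in>keys a. c ^ lookup a i) = c ^ d"
    using assms a unfolding homog_of_deg_def mdeg_def by (simp add: power_sum[symmetric])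
  finally show "lookup f a * (\<Prod>i\<in>keys a. (c * x i) ^ lookup a i)
      = c ^ d * (lookup f a * (\<Prod>i\<in>keys a. x i ^ lookup a i))"
    by (simp add: ac_simps)
qed

lemma proj_closed_scale:
  fixes Y :: "(nat \<Rightarrow> 'a::field) set"
  assumes "proj_closed n Y" "x \<in> Y" "c \<noteq> 0"
  shows "(\<lambda>i. c * x i) \<in> Y"
proof -
  obtain F where F: "\<forall>f\<in>F. homog f" "Y = {x\<in>cone_pts n. \<forall>f\<in>F. meval f x = 0}"
    using assms(1) unfolding proj_closed_def by blast
  have "(\<lambda>i. c * x i) \<in> cone_pts n" using assms(2,3) F(2) unfolding cone_pts_def by auto
  moreover have "\<forall>f\<in>F. meval f (\<lambda>i. c * x i) = 0"
  proof
    fix f assume "f \<in> F"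
    then obtain d where "homog_of_deg d f" using F(1) unfolding homog_def by blast
    then show "meval f (\<lambda>i. c * x i) = 0" using meval_scale \<open>f \<in> F\<close> assms(2) F(2) by fastforce
  qed
  ultimately show ?thesis using F(2) by blast
qed

lemma proj_closed_subset_cone_pts: "proj_closed n Y \<Longrightarrow> Y \<subseteq> cone_pts n"
  unfolding proj_closed_def by blast

definition axis_poly :: "nat \<Rightarrow> 'a::comm_semiring_1 mpoly \<Rightarrow> 'a poly" where
  "axis_poly l g = (\<Sum>a\<in>{a \<in> keys g. keys a \<subseteq> {l}}. monom (lookup g a) (lookup a l))"

lemma poly_axis_poly: "poly (axis_poly l g) t = meval g (\<lambda>i. if i = l then t else 0)"
proof -
  define K where "K = {a \<in> keys g. keys a \<subseteq> {l}}"
  have "meval g (\<lambda>i. if i = l then t else 0)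
      = meval (restrict_vars {l} g) (\<lambda>i. if i = l then t else 0)"
    by (simp add: meval_restrict_vars)
  also have "\<dots> = (\<Sum>a\<in>K. lookup g a * t ^ lookup a l)"
    unfolding meval_def keys_restrict_vars K_def[symmetric]
  proof (rule sum.cong[OF refl])
    fix a assume a: "a \<in> K"
    then obtain k where a_eq: "a = Poly_Mapping.single l k"
      using mono_eq_single_if_keys_subset unfolding K_def by blast
    have "(\<Prod>i\<in>keys a. (if i = l then t else 0) ^ lookup a i) = t ^ lookup a l"
      unfolding a_eq by (cases "k = 0") simp_all
    moreover have "lookup (restrict_vars {l} g) a = lookup g a"
      using a by (simp add: K_def lookup_restrict_vars)
    ultimately show "lookup (restrict_vars {l} g) a * (\<Prod>i\<in>keys a. (if i = l then t else 0) ^ lookup a i)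
        = lookup g a * t ^ lookup a l" by simp
  qed
  also have "\<dots> = poly (axis_poly l g) t"
    unfolding axis_poly_def K_def poly_sum poly_monom by simp
  finally show ?thesis ..
qed

lemma coeff_axis_poly:
  assumes "keys a \<subseteq> {l}"
  shows "coeff (axis_poly l g) (lookup a l) = lookup g a"
proof -
  define K where "K = {a \<in> keys g. keys a \<subseteq> {l}}"
  have "coeff (axis_poly l g) (lookup a l) = (\<Sum>b\<in>K. if b = a then lookup g b else 0)"
    unfolding axis_poly_def K_def[symmetric] coeff_sum coeff_monom
  proof (rule sum.cong[OF refl])
    fix b assume "b \<in> K"
    then have "keys b \<subseteq> {l}" unfolding K_def by blast
    have "b = a" if "lookup b l = lookup a l"
      using mono_eq_single_if_keys_subset[OF \<open>keys b \<subseteq> {l}\<close>]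
        mono_eq_single_if_keys_subset[OF assms] that by metis
    then show "(if lookup b l = lookup a l then lookup g b else 0) = (if b = a then lookup g b else 0)"
      by auto
  qed
  also have "\<dots> = lookup g a"
    using assms unfolding K_def by (simp add: sum.delta in_keys_iff)
  finally show ?thesis .
qed

lemma no_pure_power_if_vanishes_on_axis:
  fixes g :: "'a::field mpoly"
  assumes "infinite (UNIV :: 'a set)"
    and "\<And>t. t \<noteq> 0 \<Longrightarrow> meval g (\<lambda>i. if i = l then t else 0) = 0"
  shows "\<forall>a\<in>keys g. \<not> keys a \<subseteq> {l}"
proof (intro ballI notI)
  fix a assume "a \<in> keys g" and keys_a: "keys a \<subseteq> {l}"
  have "axis_poly l g = 0"
  proof (rule ccontr)
    assume "axis_poly l g \<noteq> 0"
    then have "finite {t. poly (axis_poly l g) t = 0}" by (rule poly_roots_finite)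
    moreover have "UNIV - {0} \<subseteq> {t. poly (axis_poly l g) t = 0}"
      using assms(2) by (auto simp: poly_axis_poly)
    ultimately have "finite (UNIV - {0 :: 'a})" by (rule finite_subset[rotated])
    with assms(1) show False using Diff_infinite_finite[of "{0}"] by blast
  qed
  then have "lookup g a = 0" using coeff_axis_poly[OF keys_a, of g] by simp
  with \<open>a \<in> keys g\<close> show False by (simp add: in_keys_iff)
qed

lemma vanishing_ideal_no_pure_power:
  fixes Y :: "(nat \<Rightarrow> 'a::field) set"
  assumes "infinite (UNIV :: 'a set)" and "proj_closed n Y" and "x \<in> Y"
    and "\<forall>i. i \<noteq> l \<longrightarrow> x i = 0" and "g \<in> vanishing_ideal n Y"
  shows "\<forall>a\<in>keys g. \<not> keys a \<subseteq> {l}"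
proof (rule no_pure_power_if_vanishes_on_axis[OF assms(1)])
  obtain i where "x i \<noteq> 0"
    using proj_closed_subset_cone_pts[OF assms(2)] assms(3) unfolding cone_pts_def by blast
  with assms(4) have x_l: "x l \<noteq> 0" by (cases "i = l") auto
  fix t :: 'a assume "t \<noteq> 0"
  have axis: "(\<lambda>i. if i = l then t else 0) = (\<lambda>i. (t / x l) * x i)"
  proof
    fix i show "(if i = l then t else 0) = t / x l * x i"
      using assms(4) x_l by (cases "i = l") simp_all
  qed
  have "(\<lambda>i. (t / x l) * x i) \<in> Y"
    by (rule proj_closed_scale[OF assms(2,3)]) (use \<open>t \<noteq> 0\<close> x_l in simp)
  with assms(5) show "meval g (\<lambda>i. if i = l then t else 0) = 0"
    unfolding vanishing_ideal_def axis by blast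
qed

lemma vanishing_ideal_Int_polys_in_subset:
  assumes "\<forall>x\<in>Z. \<forall>i. i \<notin> W \<longrightarrow> x i = 0" and "V \<subseteq> {0..n}" and "V \<inter> W \<subseteq> {l}"
    and "\<forall>g\<in>I. \<forall>a\<in>keys g. \<not> keys a \<subseteq> {l}"
  shows "I \<inter> polys_in V \<subseteq> vanishing_ideal n Z"
proof
  fix g assume g: "g \<in> I \<inter> polys_in V"
  then have "\<forall>a\<in>keys g. \<not> keys a \<subseteq> W"
    using assms(3,4) unfolding polys_in_def by blast
  then have "meval g x = 0" if "x \<in> Z" for x
    using meval_eq_0_if_no_monomial_in assms(1) that by blast
  moreover have "g \<in> polys_in {0..n}" using g polys_in_mono[OF assms(2)] by blast
  ultimately show "g \<in> vanishing_ideal n Z" unfolding vanishing_ideal_def by blast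
qed

lemma mmonom_in_vanishing_ideal:
  assumes "\<forall>x\<in>Y. \<forall>i. i \<notin> V \<longrightarrow> x i = 0" and "keys a \<subseteq> {0..n}" and "\<not> keys a \<subseteq> V"
  shows "mmonom a \<in> vanishing_ideal n Y"
proof -
  have keys_mmonom: "keys (mmonom a :: 'a mpoly) = {a}" by (simp add: mmonom_def)
  then have "meval (mmonom a :: 'a mpoly) x = 0" if "x \<in> Y" for x
    using meval_eq_0_if_no_monomial_in assms(1,3) that by (metis singletonD)
  with assms(2) keys_mmonom show ?thesis
    unfolding vanishing_ideal_def polys_in_def by auto
qed

lemma restrict_vars_in_vanishing_ideal:
  assumes "\<forall>x\<in>Y. \<forall>i. i \<notin> V \<longrightarrow> x i = 0" and "f \<in> vanishing_ideal n Y"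
  shows "restrict_vars V f \<in> vanishing_ideal n Y"
proof -
  have "restrict_vars V f \<in> polys_in {0..n}"
    using assms(2) by (auto simp: vanishing_ideal_def polys_in_def keys_restrict_vars)
  with assms show ?thesis
    unfolding vanishing_ideal_def by (simp add: meval_restrict_vars)
qed

lemma std_monos_split_of_varieties:
  fixes Y Z :: "(nat \<Rightarrow> 'a::field) set"
  assumes "infinite (UNIV :: 'a set)" and ord: "strict_total_order ord" and "l \<le> n"
    and "proj_closed n Y" and "proj_closed n Z"
    and "\<forall>x\<in>Y. \<forall>i<l. x i = 0" and "\<forall>x\<in>Z. \<forall>i\<in>{l+1..n}. x i = 0" and "Y \<inter> Z \<noteq> {}"
  defines "Y' \<equiv> vanishing_ideal n Y \<inter> polys_in {l..n}"
    and "Z' \<equiv> vanishing_ideal n Z \<inter> polys_in {0..l}"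
  shows "std_monos {0..n} ord (vanishing_ideal n Y \<inter> vanishing_ideal n Z) m
      = std_monos {l..n} ord Y' m \<union> std_monos {0..l} ord Z' m"
    and "std_monos {l..n} ord Y' m \<inter> std_monos {0..l} ord Z' m = {Poly_Mapping.single l m}"
proof -
  have Y_supp: "\<forall>x\<in>Y. \<forall>i. i \<notin> {l..n} \<longrightarrow> x i = 0"
    using assms(6) proj_closed_subset_cone_pts[OF assms(4)] unfolding cone_pts_def by fastforce
  have Z_supp: "\<forall>x\<in>Z. \<forall>i. i \<notin> {0..l} \<longrightarrow> x i = 0"
    using assms(7) proj_closed_subset_cone_pts[OF assms(5)] unfolding cone_pts_def
    by (fastforce simp: not_le)
  obtain x where x: "x \<in> Y" "x \<in> Z" using assms(8) by blast
  have x_axis: "\<forall>i. i \<noteq> l \<longrightarrow> x i = 0"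
    using Y_supp Z_supp x by (metis atLeastAtMost_iff linorder_neqE_nat less_imp_le_nat not_le zero_le)
  note no_pure_Y = vanishing_ideal_no_pure_power[OF assms(1,4) x(1) x_axis]
  note no_pure_Z = vanishing_ideal_no_pure_power[OF assms(1,5) x(2) x_axis]
  let ?IX = "vanishing_ideal n Y \<inter> vanishing_ideal n Z"
  have "Y' \<subseteq> vanishing_ideal n Z"
    unfolding Y'_def by (rule vanishing_ideal_Int_polys_in_subset[OF Z_supp]) (use no_pure_Y in auto)
  then have Y'_sub: "Y' \<subseteq> ?IX" unfolding Y'_def by blast
  have "Z' \<subseteq> vanishing_ideal n Y"
    unfolding Z'_def by (rule vanishing_ideal_Int_polys_in_subset[OF Y_supp]) (use no_pure_Z assms(3) in auto)
  then have Z'_sub: "Z' \<subseteq> ?IX" unfolding Z'_def by blast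
  have restrict_Y: "restrict_vars {l..n} f \<in> Y'" if "f \<in> ?IX" for f
    using restrict_vars_in_vanishing_ideal[OF Y_supp] restrict_vars_in_polys_in that
    unfolding Y'_def by blast
  have restrict_Z: "restrict_vars {0..l} f \<in> Z'" if "f \<in> ?IX" for f
    using restrict_vars_in_vanishing_ideal[OF Z_supp] restrict_vars_in_polys_in that
    unfolding Z'_def by blast
  have mixed: "mmonom a \<in> ?IX"
    if "keys a \<subseteq> {0..n}" "\<not> keys a \<subseteq> {l..n}" "\<not> keys a \<subseteq> {0..l}" for a
    using mmonom_in_vanishing_ideal[OF Y_supp] mmonom_in_vanishing_ideal[OF Z_supp] that by blast
  have "\<forall>g\<in>Y'. \<forall>b\<in>keys g. \<not> keys b \<subseteq> {l}"
    using no_pure_Y unfolding Y'_def by blast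
  from std_monos_split[OF ord assms(3) Y'_sub Z'_sub restrict_Y restrict_Z mixed this]
  show "std_monos {0..n} ord ?IX m = std_monos {l..n} ord Y' m \<union> std_monos {0..l} ord Z' m"
    and "std_monos {l..n} ord Y' m \<inter> std_monos {0..l} ord Z' m = {Poly_Mapping.single l m}"
    by blast+
qed

theorem lemma4p1:
  fixes Y Z :: "(nat \<Rightarrow> 'a::field_char_0) set"
    and n l m :: nat and r :: "nat \<Rightarrow> int" and lt :: "mono \<Rightarrow> mono \<Rightarrow> bool"
  assumes "alg_closed TYPE('a)"
    and "0 < l" and "l < n" and "0 < m"
    and "monomial_order lt"
    and "proj_subvariety n Y" and "proj_subvariety n Z"
    and "\<forall>x\<in>Y. \<forall>i<l. x i = 0"
    and "\<forall>x\<in>Z. \<forall>i\<in>{l+1..n}. x i = 0"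
    and "Y \<inter> Z \<noteq> {}"
  shows
    "let IY = vanishing_ideal n Y; IZ = vanishing_ideal n Z; IX = IY \<inter> IZ;
         Y' = IY \<inter> polys_in {l..n}; Z' = IZ \<inter> polys_in {0..l};
         PY = init_quot_dim {l..n} (weighted_ord r lt) Y' m;
         PZ = init_quot_dim {0..l} (weighted_ord r lt) Z' m;
         PX = hilb_fun {0..n} IX m
     in hm_index {0..n} r lt IX m PX
        = hm_index {l..n} r lt Y' m PY + hm_index {0..l} r lt Z' m PZ
          - real m * real PY / real (n + 1 - l) * real_of_int (\<Sum>i=l..n. r i)
          - real m * real PZ / real (l + 1) * real_of_int (\<Sum>i=0..l. r i)
          + real m * real PX / real (n + 1) * real_of_int (\<Sum>i=0..n. r i)
          + real m * real_of_int (r l)"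
proof -
  define ord where "ord = weighted_ord r lt"
  define Y' where "Y' = vanishing_ideal n Y \<inter> polys_in {l..n}"
  define Z' where "Z' = vanishing_ideal n Z \<inter> polys_in {0..l}"
  define SY where "SY = std_monos {l..n} ord Y' m"
  define SZ where "SZ = std_monos {0..l} ord Z' m"
  have "strict_total_order ord"
    unfolding ord_def using assms(5) by (rule strict_total_order_weighted_ord)
  moreover have "proj_closed n Y" and "proj_closed n Z"
    using assms(6,7) unfolding proj_subvariety_def by blast+
  ultimately have split:
      "std_monos {0..n} ord (vanishing_ideal n Y \<inter> vanishing_ideal n Z) m = SY \<union> SZ"
      "SY \<inter> SZ = {Poly_Mapping.single l m}"
    using std_monos_split_of_varieties[OF infinite_UNIV_char_0 _ _ _ _ assms(8-10)] assms(3)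
    unfolding SY_def SZ_def Y'_def Z'_def by auto
  have "finite SY" "finite SZ"
    unfolding SY_def SZ_def std_monos_def by (auto intro: finite_subset[OF _ finite_monos_deg])
  then have "(\<Sum>a\<in>SY \<union> SZ. wt r a) = (\<Sum>a\<in>SY. wt r a) + (\<Sum>a\<in>SZ. wt r a) - int m * r l"
    by (simp add: sum_Un split(2) wt_def)
  then show ?thesis
    unfolding Let_def hm_index_def ord_def[symmetric] Y'_def[symmetric] Z'_def[symmetric]
      SY_def[symmetric] SZ_def[symmetric] split(1)
    by simp
qed

end
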